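(* The category $\mathcal{SG}$ of special groups is equivalent to the category $\mathcal{SMF}$ of special multifields, via the functors $G\mapsto M(G)=G\cup\{0\}$ and $F\mapsto F^\bullet=F\setminus\{0\}$.
   Context: A special group is $(G,-1,\equiv)$ with $G$ a group of exponent 2, $-1\in G$, $\equiv$ a relation on $G\times G$ satisfying: (SG0) equivalence relation; (SG1) $\langle a,b\rangle\equiv\langle b,a\rangle$; (SG2) $\langle a,-a\rangle\equiv\langle1,-1\rangle$ with $-a=(-1)a$; (SG3) $\langle a,b\rangle\equiv\langle c,d\rangle\Rightarrow ab=cd$; (SG4) $\langle a,b\rangle\equiv\langle c,d\rangle\Rightarrow\langle a,-c\rangle\equiv\langle -b,d\rangle$; (SG5) $\langle a,b\rangle\equiv\langle c,d\rangle\Rightarrow\langle ga,gb\rangle\equiv\langle gc,gd\rangle$; (SG6) the relation on $G^3$ given by $\langle a_1,a_2,a_3\rangle\equiv\langle b_1,b_2,b_3\rangle$ iff $\exists x,y,z$ with $\langle a_1,x\rangle\equiv\langle b_1,y\rangle$, $\langle a_2,a_3\rangle\equiv\langle x,z\rangle$, $\langle b_2,b_3\rangle\equiv\langle y,z\rangle$ is transitive. $D_G(a,b)=\{c:\exists d,\ \langle c,d\rangle\equiv\langle a,b\rangle\}$. Morphisms of special groups are group homomorphisms $f$ with $f(-1)=-1$ and $\langle a,b\rangle\equiv\langle c,d\rangle\Rightarrow\langle f(a),f(b)\rangle\equiv\langle f(c),f(d)\rangle$. $M(G)=G\cup\{0\}$ ($0$ new) with $a\cdot b=0$ if $a=0$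 or $b=0$, the product of $G$ otherwise; $-a=(-1)a$; $a+b=\{b\}$ if $a=0$, $\{a\}$ if $b=0$, $M(G)$ if $a=-b\ne0$, $D_G(a,b)$ otherwise. On morphisms, $M(f)$ extends $f$ by $0\mapsto0$. A multiring is a tuple $(R,+,\cdot,-,0,1)$ with $+:R\times R\to\mathcal P(R)\setminus\{\emptyset\}$ satisfying: $z\in x+y\Rightarrow x\in z+(-y)$ and $y\in(-x)+z$; $y\in0+x\iff y=x$; $+$ associative and commutative; $(R,\cdot,1)$ a commutative monoid; $a0=0$; $c\in a+b\Rightarrow cd\in ad+bd$; multifield: nonzero elements invertible; morphisms preserve $+$ (as $c\in a+b\Rightarrow f(c)\in f(a)+f(b)$), $-$, $0$, $\cdot$, $1$. A special multifield is a multifield $F$ such that, with $F^\bullet=F\setminus\{0\}$: (i) $a^2=1$ for $a\in F^\bullet$; (ii) $a+(-a)=F$ for $a\in F^\bullet$; (iii) $ab=cd$, $a\in c+d\Rightarrow c\in a+b$; (iv) $ab=cd=ef$, $a\in c+d$, $c\in e+f\Rightarrow a\in e+f$; (v) if there are $x,y,z\in F^\bullet$ with $ax=cy$, $a=xz$, $c=yz$, $a\in c+y$, $b\in x+z$, $d\in y+z$, then there are $t,v,w\in F^\bullet$ with $bt=cv$, $b=tw$, $c=vw$, $b\in c+v$, $a\in t+w$, $d\in v+w$ (all letters in $F^\bullet$). $F^\bullet$ is a special group with $\langle a,b\rangle\equiv\langle c,d\rangle$ iff $ab=cd$ and $a\in c+d$; morphisms are restricted. $\mathcal{SMF}$ has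 special multifields and multiring morphisms. *)

theory Defs
  imports Main
begin

record 'a sgroup =
  sg_carrier :: "'a set"
  sg_mult :: "'a \<Rightarrow> 'a \<Rightarrow> 'a"
  sg_one :: 'a
  sg_mone :: 'a
  sg_equiv :: "'a \<Rightarrow> 'a \<Rightarrow> 'a \<Rightarrow> 'a \<Rightarrow> bool"

definition sg_neg :: "'a sgroup \<Rightarrow> 'a \<Rightarrow> 'a" where
  "sg_neg G a = sg_mult G (sg_mone G) a"

definition sg_equiv3 :: "'a sgroup \<Rightarrow> 'a \<Rightarrow> 'a \<Rightarrow> 'a \<Rightarrow> 'a \<Rightarrow> 'a \<Rightarrow> 'a \<Rightarrow> bool" where
  "sg_equiv3 G a1 a2 a3 b1 b2 b3 \<longleftrightarrow>
     (\<exists>x\<in>sg_carrier G. \<exists>y\<in>sg_carrier G. \<exists>z\<in>sg_carrier G.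
        sg_equiv G a1 x b1 y \<and> sg_equiv G a2 a3 x z \<and> sg_equiv G b2 b3 y z)"

definition sg_D :: "'a sgroup \<Rightarrow> 'a \<Rightarrow> 'a \<Rightarrow> 'a set" where
  "sg_D G a b = {c \<in> sg_carrier G. \<exists>d\<in>sg_carrier G. sg_equiv G c d a b}"

definition is_special_group :: "'a sgroup \<Rightarrow> bool" where
  "is_special_group G \<longleftrightarrow>
    (let S = sg_carrier G; m = sg_mult G; e = sg_one G; neg = sg_neg G; eq = sg_equiv G in
    \<comment> \<open>group of exponent 2\<close>
    (\<forall>a\<in>S. \<forall>b\<in>S. m a b \<in> S) \<and> e \<in> S \<and>
    (\<forall>a\<in>S. \<forall>b\<in>S. \<forall>c\<in>S. m (m a b) c = m a (m b c)) \<and>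
    (\<forall>a\<in>S. m e a = a \<and> m a e = a) \<and>
    (\<forall>a\<in>S. m a a = e) \<and>
    sg_mone G \<in> S \<and>
    \<comment> \<open>the relation lives on S \<times> S\<close>
    (\<forall>a b c d. eq a b c d \<longrightarrow> a \<in> S \<and> b \<in> S \<and> c \<in> S \<and> d \<in> S) \<and>
    \<comment> \<open>SG0\<close>
    (\<forall>a\<in>S. \<forall>b\<in>S. eq a b a b) \<and>
    (\<forall>a b c d. eq a b c d \<longrightarrow> eq c d a b) \<and>
    (\<forall>a b c d e' f. eq a b c d \<longrightarrow> eq c d e' f \<longrightarrow> eq a b e' f) \<and>
    \<comment> \<open>SG1\<close>
    (\<forall>a\<in>S. \<forall>b\<in>S. eq a b b a) \<and>
    \<comment> \<open>SG2\<close>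
    (\<forall>a\<in>S. eq a (neg a) e (sg_mone G)) \<and>
    \<comment> \<open>SG3\<close>
    (\<forall>a b c d. eq a b c d \<longrightarrow> m a b = m c d) \<and>
    \<comment> \<open>SG4\<close>
    (\<forall>a b c d. eq a b c d \<longrightarrow> eq a (neg c) (neg b) d) \<and>
    \<comment> \<open>SG5\<close>
    (\<forall>a b c d. \<forall>g\<in>S. eq a b c d \<longrightarrow> eq (m g a) (m g b) (m g c) (m g d)) \<and>
    \<comment> \<open>SG6\<close>
    (\<forall>a1\<in>S. \<forall>a2\<in>S. \<forall>a3\<in>S. \<forall>b1\<in>S. \<forall>b2\<in>S. \<forall>b3\<in>S. \<forall>c1\<in>S. \<forall>c2\<in>S. \<forall>c3\<in>S.
       sg_equiv3 G a1 a2 a3 b1 b2 b3 \<longrightarrow> sg_equiv3 G b1 b2 b3 c1 c2 c3 \<longrightarrow>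
       sg_equiv3 G a1 a2 a3 c1 c2 c3))"

definition sg_morphism :: "'a sgroup \<Rightarrow> 'b sgroup \<Rightarrow> ('a \<Rightarrow> 'b) \<Rightarrow> bool" where
  "sg_morphism G H f \<longleftrightarrow>
    (\<forall>a\<in>sg_carrier G. f a \<in> sg_carrier H) \<and>
    (\<forall>a\<in>sg_carrier G. \<forall>b\<in>sg_carrier G. f (sg_mult G a b) = sg_mult H (f a) (f b)) \<and>
    f (sg_mone G) = sg_mone H \<and>
    (\<forall>a b c d. sg_equiv G a b c d \<longrightarrow> sg_equiv H (f a) (f b) (f c) (f d))"

definition sg_iso :: "'a sgroup \<Rightarrow> 'b sgroup \<Rightarrow> ('a \<Rightarrow> 'b) \<Rightarrow> bool" where
  "sg_iso G H f \<longleftrightarrow> sg_morphism G H f \<and>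
    (\<exists>g. sg_morphism H G g \<and> (\<forall>x\<in>sg_carrier G. g (f x) = x) \<and> (\<forall>y\<in>sg_carrier H. f (g y) = y))"

record 'a mring =
  mr_carrier :: "'a set"
  mr_add :: "'a \<Rightarrow> 'a \<Rightarrow> 'a set"
  mr_mult :: "'a \<Rightarrow> 'a \<Rightarrow> 'a"
  mr_neg :: "'a \<Rightarrow> 'a"
  mr_zero :: 'a
  mr_one :: 'a

definition mr_setadd :: "'a mring \<Rightarrow> 'a set \<Rightarrow> 'a \<Rightarrow> 'a set" where
  "mr_setadd R A z = (\<Union>t\<in>A. mr_add R t z)"

definition is_multiring :: "'a mring \<Rightarrow> bool" where
  "is_multiring R \<longleftrightarrow>
    (let S = mr_carrier R; p = mr_add R; m = mr_mult R; n = mr_neg R; z = mr_zero R; e = mr_one R in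
    z \<in> S \<and> e \<in> S \<and>
    (\<forall>x\<in>S. n x \<in> S) \<and>
    (\<forall>x\<in>S. \<forall>y\<in>S. m x y \<in> S) \<and>
    (\<forall>x\<in>S. \<forall>y\<in>S. p x y \<subseteq> S \<and> p x y \<noteq> {}) \<and>
    (\<forall>x\<in>S. \<forall>y\<in>S. \<forall>w\<in>S. w \<in> p x y \<longrightarrow> x \<in> p w (n y) \<and> y \<in> p (n x) w) \<and>
    (\<forall>x\<in>S. \<forall>y\<in>S. y \<in> p z x \<longleftrightarrow> y = x) \<and>
    (\<forall>x\<in>S. \<forall>y\<in>S. \<forall>w\<in>S. (\<Union>t\<in>p y w. p x t) = (\<Union>t\<in>p x y. p t w)) \<and>
    (\<forall>x\<in>S. \<forall>y\<in>S. p x y = p y x) \<and>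
    (\<forall>x\<in>S. \<forall>y\<in>S. \<forall>w\<in>S. m (m x y) w = m x (m y w)) \<and>
    (\<forall>x\<in>S. \<forall>y\<in>S. m x y = m y x) \<and>
    (\<forall>x\<in>S. m e x = x) \<and>
    (\<forall>x\<in>S. m x z = z) \<and>
    (\<forall>a\<in>S. \<forall>b\<in>S. \<forall>c\<in>S. \<forall>d\<in>S. c \<in> p a b \<longrightarrow> m c d \<in> p (m a d) (m b d)))"

definition is_multifield :: "'a mring \<Rightarrow> bool" where
  "is_multifield R \<longleftrightarrow> is_multiring R \<and> mr_one R \<noteq> mr_zero R \<and>
    (\<forall>a\<in>mr_carrier R - {mr_zero R}. \<exists>b\<in>mr_carrier R. mr_mult R a b = mr_one R)"

definition mr_morphism :: "'a mring \<Rightarrow> 'b mring \<Rightarrow> ('a \<Rightarrow> 'b) \<Rightarrow> bool" where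
  "mr_morphism R T f \<longleftrightarrow>
    (\<forall>a\<in>mr_carrier R. f a \<in> mr_carrier T) \<and>
    (\<forall>a\<in>mr_carrier R. \<forall>b\<in>mr_carrier R. \<forall>c\<in>mr_carrier R.
        c \<in> mr_add R a b \<longrightarrow> f c \<in> mr_add T (f a) (f b)) \<and>
    (\<forall>a\<in>mr_carrier R. f (mr_neg R a) = mr_neg T (f a)) \<and>
    f (mr_zero R) = mr_zero T \<and>
    (\<forall>a\<in>mr_carrier R. \<forall>b\<in>mr_carrier R. f (mr_mult R a b) = mr_mult T (f a) (f b)) \<and>
    f (mr_one R) = mr_one T"

definition mr_iso :: "'a mring \<Rightarrow> 'b mring \<Rightarrow> ('a \<Rightarrow> 'b) \<Rightarrow> bool" where
  "mr_iso R T f \<longleftrightarrow> mr_morphism R T f \<and>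
    (\<exists>g. mr_morphism T R g \<and> (\<forall>x\<in>mr_carrier R. g (f x) = x) \<and> (\<forall>y\<in>mr_carrier T. f (g y) = y))"

definition is_special_multifield :: "'a mring \<Rightarrow> bool" where
  "is_special_multifield F \<longleftrightarrow> is_multifield F \<and>
    (let B = mr_carrier F - {mr_zero F}; p = mr_add F; m = mr_mult F; n = mr_neg F in
    \<comment> \<open>(i)\<close>
    (\<forall>a\<in>B. m a a = mr_one F) \<and>
    \<comment> \<open>(ii)\<close>
    (\<forall>a\<in>B. p a (n a) = mr_carrier F) \<and>
    \<comment> \<open>(iii)\<close>
    (\<forall>a\<in>B. \<forall>b\<in>B. \<forall>c\<in>B. \<forall>d\<in>B. m a b = m c d \<longrightarrow> a \<in> p c d \<longrightarrow> c \<in> p a b) \<and>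
    \<comment> \<open>(iv)\<close>
    (\<forall>a\<in>B. \<forall>b\<in>B. \<forall>c\<in>B. \<forall>d\<in>B. \<forall>e\<in>B. \<forall>f\<in>B.
       m a b = m c d \<longrightarrow> m c d = m e f \<longrightarrow> a \<in> p c d \<longrightarrow> c \<in> p e f \<longrightarrow> a \<in> p e f) \<and>
    \<comment> \<open>(v)\<close>
    (\<forall>a\<in>B. \<forall>b\<in>B. \<forall>c\<in>B. \<forall>d\<in>B.
       (\<exists>x\<in>B. \<exists>y\<in>B. \<exists>z\<in>B. m a x = m c y \<and> a = m x z \<and> c = m y z \<and>
           a \<in> p c y \<and> b \<in> p x z \<and> d \<in> p y z) \<longrightarrow>
       (\<exists>t\<in>B. \<exists>v\<in>B. \<exists>w\<in>B. m b t = m c v \<and> b = m t w \<and> c = m v w \<and>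
           b \<in> p c v \<and> a \<in> p t w \<and> d \<in> p v w)))"

text \<open>\<open>F \<mapsto> F-bullet\<close>: on morphisms it is restriction (the same function).\<close>
definition bullet :: "'a mring \<Rightarrow> 'a sgroup" where
  "bullet F = \<lparr> sg_carrier = mr_carrier F - {mr_zero F},
                sg_mult = mr_mult F,
                sg_one = mr_one F,
                sg_mone = mr_neg F (mr_one F),
                sg_equiv = (\<lambda>a b c d. a \<in> mr_carrier F - {mr_zero F} \<and> b \<in> mr_carrier F - {mr_zero F}
                     \<and> c \<in> mr_carrier F - {mr_zero F} \<and> d \<in> mr_carrier F - {mr_zero F}
                     \<and> mr_mult F a b = mr_mult F c d \<and> a \<in> mr_add F c d) \<rparr>"

text \<open>\<open>G \<mapsto> M(G)\<close> on the type \<open>'a option\<close>: \<open>None\<close> is the new zero, \<open>Some g\<close> represents \<open>g \<in> G\<close>.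
  On morphisms, \<open>M(f) = map_option f\<close>.\<close>
fun Mmult :: "'a sgroup \<Rightarrow> 'a option \<Rightarrow> 'a option \<Rightarrow> 'a option" where
  "Mmult G (Some a) (Some b) = Some (sg_mult G a b)"
| "Mmult G _ _ = None"

definition Mcarrier :: "'a sgroup \<Rightarrow> 'a option set" where
  "Mcarrier G = insert None (Some ` sg_carrier G)"

fun Madd :: "'a sgroup \<Rightarrow> 'a option \<Rightarrow> 'a option \<Rightarrow> 'a option set" where
  "Madd G None b = {b}"
| "Madd G (Some a) None = {Some a}"
| "Madd G (Some a) (Some b) =
     (if a = sg_neg G b then Mcarrier G else Some ` sg_D G a b)"

definition M :: "'a sgroup \<Rightarrow> 'a option mring" where
  "M G = \<lparr> mr_carrier = Mcarrier G,
           mr_add = Madd G,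
           mr_mult = Mmult G,
           mr_neg = map_option (sg_neg G),
           mr_zero = None,
           mr_one = Some (sg_one G) \<rparr>"

definition counit :: "'a mring \<Rightarrow> 'a option \<Rightarrow> 'a" where
  "counit F x = (case x of None \<Rightarrow> mr_zero F | Some a \<Rightarrow> a)"

end

theory Submission
  imports Defs
begin

text \<open>In \<open>M(G)\<close> the sum of nonzero \<open>a \<noteq> -b\<close> is the value set \<open>D(a, b)\<close>, and conversely
  \<open>\<langle>a, b\<rangle> \<equiv> \<langle>c, d\<rangle>\<close> holds in \<open>F\<^sup>\<bullet>\<close> iff \<open>ab = cd\<close> and \<open>a \<in> c + d\<close>. Under this dictionary
  the multifield axioms (iii) and (iv) are symmetry and transitivity of \<open>\<equiv>\<close>, associativity of the
  multivalued sum is a symmetry of the ternary relation of (SG6), and axiom (v) says that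
  \<open>\<langle>a, b, ba\<rangle> \<equiv> \<langle>c, d, dc\<rangle>\<close> implies \<open>\<langle>b, a, ab\<rangle> \<equiv> \<langle>c, d, dc\<rangle>\<close>. Since rescaling by a group
  element brings any triple into the form \<open>\<langle>a, b, ba\<rangle>\<close>, this swap property is equivalent to the
  transitivity (SG6). Unit \<open>G \<rightarrow> M(G)\<^sup>\<bullet>\<close> and counit \<open>M(F\<^sup>\<bullet>) \<rightarrow> F\<close> are then the evident
  bijections.\<close>

section \<open>Special groups\<close>

locale exp2_group =
  fixes G :: "'a sgroup"
  assumes mult_closed [simp]: "a \<in> sg_carrier G \<Longrightarrow> b \<in> sg_carrier G \<Longrightarrow> sg_mult G a b \<in> sg_carrier G"
    and one_closed [simp]: "sg_one G \<in> sg_carrier G"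
    and mult_assoc [simp]: "a \<in> sg_carrier G \<Longrightarrow> b \<in> sg_carrier G \<Longrightarrow> c \<in> sg_carrier G \<Longrightarrow>
      sg_mult G (sg_mult G a b) c = sg_mult G a (sg_mult G b c)"
    and one_mult [simp]: "a \<in> sg_carrier G \<Longrightarrow> sg_mult G (sg_one G) a = a"
    and mult_one [simp]: "a \<in> sg_carrier G \<Longrightarrow> sg_mult G a (sg_one G) = a"
    and mult_self [simp]: "a \<in> sg_carrier G \<Longrightarrow> sg_mult G a a = sg_one G"
begin

abbreviation S :: "'a set" where "S \<equiv> sg_carrier G"
abbreviation mult :: "'a \<Rightarrow> 'a \<Rightarrow> 'a" (infixl "\<cdot>" 70) where "a \<cdot> b \<equiv> sg_mult G a b"

lemma mult_self_left [simp]: "a \<in> S \<Longrightarrow> b \<in> S \<Longrightarrow> a \<cdot> (a \<cdot> b) = b"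
  by (simp flip: mult_assoc)

lemma mult_commute: assumes "a \<in> S" "b \<in> S" shows "a \<cdot> b = b \<cdot> a"
proof -
  have "(a \<cdot> b) \<cdot> (b \<cdot> a) = sg_one G" using assms by simp
  then show ?thesis using assms by (metis mult_closed mult_self_left mult_one)
qed

lemma mult_left_commute: "a \<in> S \<Longrightarrow> b \<in> S \<Longrightarrow> c \<in> S \<Longrightarrow> a \<cdot> (b \<cdot> c) = b \<cdot> (a \<cdot> c)"
  by (metis mult_assoc mult_commute)

lemma mult_self_right [simp]: "a \<in> S \<Longrightarrow> b \<in> S \<Longrightarrow> b \<cdot> (a \<cdot> b) = a"
  by (metis mult_commute mult_self_left)

lemmas mult_ac = mult_commute mult_left_commute

lemma mult_scaled: "g \<in> S \<Longrightarrow> a \<in> S \<Longrightarrow> b \<in> S \<Longrightarrow> (g \<cdot> a) \<cdot> (g \<cdot> b) = a \<cdot> b"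
  by (simp add: mult_left_commute[of a g b])

end

text \<open>Axioms (SG0), (SG1), (SG3) and (SG5), under which (SG6) is equivalent to a swap property.\<close>
locale pre_special_group = exp2_group +
  assumes equiv_closed: "sg_equiv G a b c d \<Longrightarrow> a \<in> S \<and> b \<in> S \<and> c \<in> S \<and> d \<in> S"
    and equiv_refl: "a \<in> S \<Longrightarrow> b \<in> S \<Longrightarrow> sg_equiv G a b a b"
    and equiv_sym: "sg_equiv G a b c d \<Longrightarrow> sg_equiv G c d a b"
    and equiv_trans: "sg_equiv G a b c d \<Longrightarrow> sg_equiv G c d a' b' \<Longrightarrow> sg_equiv G a b a' b'"
    and equiv_swap: "a \<in> S \<Longrightarrow> b \<in> S \<Longrightarrow> sg_equiv G a b b a"
    and equiv_mult_eq: "sg_equiv G a b c d \<Longrightarrow> a \<cdot> b = c \<cdot> d"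
    and equiv_scale: "g \<in> S \<Longrightarrow> sg_equiv G a b c d \<Longrightarrow> sg_equiv G (g \<cdot> a) (g \<cdot> b) (g \<cdot> c) (g \<cdot> d)"
begin

abbreviation equiv :: "'a \<Rightarrow> 'a \<Rightarrow> 'a \<Rightarrow> 'a \<Rightarrow> bool" ("\<langle>_, _\<rangle> \<approx> \<langle>_, _\<rangle>" [51, 51, 51, 51] 50)
  where "\<langle>a, b\<rangle> \<approx> \<langle>c, d\<rangle> \<equiv> sg_equiv G a b c d"

lemma equiv_swap_left: "\<langle>a, b\<rangle> \<approx> \<langle>c, d\<rangle> \<Longrightarrow> \<langle>b, a\<rangle> \<approx> \<langle>c, d\<rangle>"
  using equiv_swap equiv_trans equiv_closed by blast

lemma equiv_swap_right: "\<langle>a, b\<rangle> \<approx> \<langle>c, d\<rangle> \<Longrightarrow> \<langle>a, b\<rangle> \<approx> \<langle>d, c\<rangle>"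
  using equiv_swap equiv_trans equiv_closed by blast

abbreviation equiv3 ("\<langle>_, _, _\<rangle> \<approx> \<langle>_, _, _\<rangle>" [51, 51, 51, 51, 51, 51] 50)
  where "\<langle>a1, a2, a3\<rangle> \<approx> \<langle>b1, b2, b3\<rangle> \<equiv> sg_equiv3 G a1 a2 a3 b1 b2 b3"

lemma equiv3_closed:
  "\<langle>a1, a2, a3\<rangle> \<approx> \<langle>b1, b2, b3\<rangle> \<Longrightarrow> a1 \<in> S \<and> a2 \<in> S \<and> a3 \<in> S \<and> b1 \<in> S \<and> b2 \<in> S \<and> b3 \<in> S"
  unfolding sg_equiv3_def using equiv_closed by blast

lemma equiv3_mult_eq:
  assumes "\<langle>a1, a2, a3\<rangle> \<approx> \<langle>b1, b2, b3\<rangle>"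
  shows "a1 \<cdot> (a2 \<cdot> a3) = b1 \<cdot> (b2 \<cdot> b3)"
proof -
  obtain x y z where "\<langle>a1, x\<rangle> \<approx> \<langle>b1, y\<rangle>" "\<langle>a2, a3\<rangle> \<approx> \<langle>x, z\<rangle>" "\<langle>b2, b3\<rangle> \<approx> \<langle>y, z\<rangle>"
    using assms unfolding sg_equiv3_def by blast
  then show ?thesis
    using equiv_closed by (metis equiv_mult_eq mult_assoc)
qed

lemma equiv3_scale:
  "g \<in> S \<Longrightarrow> \<langle>a1, a2, a3\<rangle> \<approx> \<langle>b1, b2, b3\<rangle> \<Longrightarrow>
    \<langle>g \<cdot> a1, g \<cdot> a2, g \<cdot> a3\<rangle> \<approx> \<langle>g \<cdot> b1, g \<cdot> b2, g \<cdot> b3\<rangle>"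
  unfolding sg_equiv3_def
  by (elim bexE conjE) (rule bexI[of _ "g \<cdot> _"], rule bexI[of _ "g \<cdot> _"], rule bexI[of _ "g \<cdot> _"],
      auto intro: equiv_scale)

lemma equiv3_unscale:
  assumes "g \<in> S" "\<langle>g \<cdot> a1, g \<cdot> a2, g \<cdot> a3\<rangle> \<approx> \<langle>g \<cdot> b1, g \<cdot> b2, g \<cdot> b3\<rangle>"
    and "a1 \<in> S" "a2 \<in> S" "a3 \<in> S" "b1 \<in> S" "b2 \<in> S" "b3 \<in> S"
  shows "\<langle>a1, a2, a3\<rangle> \<approx> \<langle>b1, b2, b3\<rangle>"
  using equiv3_scale[OF assms(1,2)] assms by simp

lemma equiv3_subst:
  "\<langle>a2, a3\<rangle> \<approx> \<langle>a2', a3'\<rangle> \<Longrightarrow> \<langle>a1, a2', a3'\<rangle> \<approx> \<langle>b1, b2, b3\<rangle> \<Longrightarrow> \<langle>a1, a2, a3\<rangle> \<approx> \<langle>b1, b2, b3\<rangle>"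
  unfolding sg_equiv3_def using equiv_trans by blast

lemma equiv3_swap12: "a1 \<in> S \<Longrightarrow> a2 \<in> S \<Longrightarrow> a3 \<in> S \<Longrightarrow> \<langle>a1, a2, a3\<rangle> \<approx> \<langle>a2, a1, a3\<rangle>"
  unfolding sg_equiv3_def
  by (rule bexI[of _ a2], rule bexI[of _ a1], rule bexI[of _ a3]) (auto intro: equiv_swap equiv_refl)

lemma equiv3_swap13: "a1 \<in> S \<Longrightarrow> a2 \<in> S \<Longrightarrow> a3 \<in> S \<Longrightarrow> \<langle>a1, a2, a3\<rangle> \<approx> \<langle>a3, a2, a1\<rangle>"
  unfolding sg_equiv3_def
  by (rule bexI[of _ a3], rule bexI[of _ a1], rule bexI[of _ a2]) (auto intro: equiv_swap)

text \<open>Transitivity of the ternary relation reduces to the special case where the first two entries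
  of a triple \<open>\<langle>a, b, b \<cdot> a\<rangle>\<close> are swapped: scaling by \<open>p1 \<cdot> p2 \<cdot> p3\<close> brings every triple
  into this form.\<close>
lemma equiv3_trans_if_swap:
  assumes swap: "\<And>a b c d. a \<in> S \<Longrightarrow> b \<in> S \<Longrightarrow> \<langle>a, b, b \<cdot> a\<rangle> \<approx> \<langle>c, d, d \<cdot> c\<rangle> \<Longrightarrow>
      \<langle>b, a, a \<cdot> b\<rangle> \<approx> \<langle>c, d, d \<cdot> c\<rangle>"
    and A: "\<langle>a1, a2, a3\<rangle> \<approx> \<langle>b1, b2, b3\<rangle>" and B: "\<langle>b1, b2, b3\<rangle> \<approx> \<langle>c1, c2, c3\<rangle>"
  shows "\<langle>a1, a2, a3\<rangle> \<approx> \<langle>c1, c2, c3\<rangle>"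
proof -
  have c: "c1 \<in> S" "c2 \<in> S" "c3 \<in> S" using equiv3_closed[OF B] by auto
  have swap12: "\<langle>p1, p2, p3\<rangle> \<approx> \<langle>c1, c2, c3\<rangle>" if h: "\<langle>p2, p1, p3\<rangle> \<approx> \<langle>c1, c2, c3\<rangle>" for p1 p2 p3
  proof -
    have p: "p1 \<in> S" "p2 \<in> S" "p3 \<in> S" using equiv3_closed[OF h] by auto
    define g where "g = p1 \<cdot> (p2 \<cdot> p3)"
    have g: "g \<in> S" using p g_def by simp
    have "g = c1 \<cdot> (c2 \<cdot> c3)"
      using equiv3_mult_eq[OF h] p unfolding g_def by (simp add: mult_left_commute)
    then have "g \<cdot> c3 = c1 \<cdot> c2" using c by simp
    then have gc3: "g \<cdot> c3 = (g \<cdot> c2) \<cdot> (g \<cdot> c1)"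
      using c g mult_scaled[of g c2 c1] by (simp add: mult_commute[of c2 c1])
    have gp3: "g \<cdot> p3 = (g \<cdot> p1) \<cdot> (g \<cdot> p2)" "g \<cdot> p3 = (g \<cdot> p2) \<cdot> (g \<cdot> p1)"
      using p unfolding g_def by (simp_all add: mult_ac)
    have "\<langle>g \<cdot> p2, g \<cdot> p1, g \<cdot> p3\<rangle> \<approx> \<langle>g \<cdot> c1, g \<cdot> c2, g \<cdot> c3\<rangle>" using equiv3_scale[OF g h] .
    then have "\<langle>g \<cdot> p1, g \<cdot> p2, g \<cdot> p3\<rangle> \<approx> \<langle>g \<cdot> c1, g \<cdot> c2, g \<cdot> c3\<rangle>"
      using swap[of "g \<cdot> p2" "g \<cdot> p1" "g \<cdot> c1" "g \<cdot> c2"] p c g gp3 gc3 by simp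
    then show ?thesis using equiv3_unscale[OF g] p c by blast
  qed
  have swap23: "\<langle>p1, p2, p3\<rangle> \<approx> \<langle>c1, c2, c3\<rangle>" if h: "\<langle>p1, p3, p2\<rangle> \<approx> \<langle>c1, c2, c3\<rangle>" for p1 p2 p3
    using equiv3_subst[OF _ h] equiv3_closed[OF h] equiv_swap by blast
  have subst12: "\<langle>p1, p2, p3\<rangle> \<approx> \<langle>c1, c2, c3\<rangle>"
    if h: "\<langle>q1, q2, p3\<rangle> \<approx> \<langle>c1, c2, c3\<rangle>" and q: "\<langle>p1, p2\<rangle> \<approx> \<langle>q1, q2\<rangle>" for p1 p2 p3 q1 q2
    using swap12 swap23 equiv3_subst[OF q] h by blast
  obtain x y z where xyz: "\<langle>a1, x\<rangle> \<approx> \<langle>b1, y\<rangle>" "\<langle>a2, a3\<rangle> \<approx> \<langle>x, z\<rangle>" "\<langle>b2, b3\<rangle> \<approx> \<langle>y, z\<rangle>"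
    using A unfolding sg_equiv3_def by blast
  have "\<langle>b1, y, z\<rangle> \<approx> \<langle>c1, c2, c3\<rangle>" using equiv3_subst[OF equiv_sym[OF xyz(3)] B] .
  then have "\<langle>a1, x, z\<rangle> \<approx> \<langle>c1, c2, c3\<rangle>" using subst12 xyz(1) by blast
  then show ?thesis using equiv3_subst[OF xyz(2)] by blast
qed

lemma equiv3_swap_if_trans:
  assumes trans: "\<And>a1 a2 a3 b1 b2 b3 c1 c2 c3. \<langle>a1, a2, a3\<rangle> \<approx> \<langle>b1, b2, b3\<rangle> \<Longrightarrow>
      \<langle>b1, b2, b3\<rangle> \<approx> \<langle>c1, c2, c3\<rangle> \<Longrightarrow> \<langle>a1, a2, a3\<rangle> \<approx> \<langle>c1, c2, c3\<rangle>"
    and "a \<in> S" "b \<in> S" "\<langle>a, b, b \<cdot> a\<rangle> \<approx> \<langle>c, d, d \<cdot> c\<rangle>"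
  shows "\<langle>b, a, a \<cdot> b\<rangle> \<approx> \<langle>c, d, d \<cdot> c\<rangle>"
proof -
  have "\<langle>b, a, a \<cdot> b\<rangle> \<approx> \<langle>a, b, b \<cdot> a\<rangle>" using equiv3_swap12 assms(2,3) mult_commute by simp
  then show ?thesis using trans assms(4) by blast
qed

end

locale special_group = pre_special_group +
  assumes mone_closed [simp]: "sg_mone G \<in> sg_carrier G"
    and equiv_neg_self: "a \<in> sg_carrier G \<Longrightarrow> sg_equiv G a (sg_neg G a) (sg_one G) (sg_mone G)"
    and equiv_neg: "sg_equiv G a b c d \<Longrightarrow> sg_equiv G a (sg_neg G c) (sg_neg G b) d"
    and equiv3_trans: "sg_equiv3 G a1 a2 a3 b1 b2 b3 \<Longrightarrow> sg_equiv3 G b1 b2 b3 c1 c2 c3 \<Longrightarrow>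
      sg_equiv3 G a1 a2 a3 c1 c2 c3"
begin

lemma neg_closed [simp]: "a \<in> S \<Longrightarrow> sg_neg G a \<in> S"
  by (simp add: sg_neg_def)

lemma neg_neg [simp]: "a \<in> S \<Longrightarrow> sg_neg G (sg_neg G a) = a"
  by (simp add: sg_neg_def)

lemma eq_neg_iff: "a \<in> S \<Longrightarrow> b \<in> S \<Longrightarrow> a = sg_neg G b \<longleftrightarrow> b = sg_neg G a"
  by auto

lemma mult_neg: "g \<in> S \<Longrightarrow> a \<in> S \<Longrightarrow> g \<cdot> sg_neg G a = sg_neg G (g \<cdot> a)"
  by (simp add: sg_neg_def mult_left_commute)

lemma sg_D_closed: "c \<in> sg_D G a b \<Longrightarrow> c \<in> S"
  unfolding sg_D_def by auto

lemma sg_D_self: "a \<in> S \<Longrightarrow> b \<in> S \<Longrightarrow> a \<in> sg_D G a b"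
  unfolding sg_D_def using equiv_refl by auto

lemma sg_D_neg: assumes "a \<in> S" shows "sg_D G a (sg_neg G a) = S"
proof
  show "S \<subseteq> sg_D G a (sg_neg G a)"
  proof
    fix c assume "c \<in> S"
    then have "\<langle>c, sg_neg G c\<rangle> \<approx> \<langle>a, sg_neg G a\<rangle>"
      using equiv_trans[OF equiv_neg_self equiv_sym[OF equiv_neg_self]] assms by blast
    then show "c \<in> sg_D G a (sg_neg G a)" unfolding sg_D_def using \<open>c \<in> S\<close> by auto
  qed
qed (use sg_D_closed in blast)

lemma sg_D_commute: "sg_D G a b = sg_D G b a"
  unfolding sg_D_def using equiv_swap_right by blast

lemma equiv_iff:
  assumes "a \<in> S" "b \<in> S" "c \<in> S" "d \<in> S"
  shows "\<langle>a, b\<rangle> \<approx> \<langle>c, d\<rangle> \<longleftrightarrow> a \<cdot> b = c \<cdot> d \<and> a \<in> sg_D G c d"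
proof
  assume "\<langle>a, b\<rangle> \<approx> \<langle>c, d\<rangle>"
  then show "a \<cdot> b = c \<cdot> d \<and> a \<in> sg_D G c d"
    using equiv_mult_eq assms unfolding sg_D_def by blast
next
  assume h: "a \<cdot> b = c \<cdot> d \<and> a \<in> sg_D G c d"
  then obtain b' where b': "b' \<in> S" "\<langle>a, b'\<rangle> \<approx> \<langle>c, d\<rangle>" unfolding sg_D_def by auto
  have "a \<cdot> b' = a \<cdot> b" using equiv_mult_eq[OF b'(2)] h by simp
  then have "b' = b" using assms b' by (metis mult_self_left)
  then show "\<langle>a, b\<rangle> \<approx> \<langle>c, d\<rangle>" using b' by simp
qed

lemma sg_D_scale:
  assumes "g \<in> S" "c \<in> sg_D G a b"
  shows "g \<cdot> c \<in> sg_D G (g \<cdot> a) (g \<cdot> b)"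
proof -
  obtain d where "\<langle>c, d\<rangle> \<approx> \<langle>a, b\<rangle>" using assms(2) unfolding sg_D_def by auto
  then have "\<langle>g \<cdot> c, g \<cdot> d\<rangle> \<approx> \<langle>g \<cdot> a, g \<cdot> b\<rangle>" using equiv_scale[OF assms(1)] by blast
  then show ?thesis unfolding sg_D_def using equiv_closed by blast
qed

lemma sg_D_reverse:
  assumes "c \<in> sg_D G a b" "a \<in> S" "b \<in> S"
  shows "a \<in> sg_D G c (sg_neg G b)" "b \<in> sg_D G (sg_neg G a) c"
proof -
  obtain d where d: "d \<in> S" "\<langle>c, d\<rangle> \<approx> \<langle>a, b\<rangle>" using assms unfolding sg_D_def by auto
  then have ab: "\<langle>a, b\<rangle> \<approx> \<langle>d, c\<rangle>" using equiv_sym equiv_swap_right by blast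
  have "\<langle>a, sg_neg G d\<rangle> \<approx> \<langle>c, sg_neg G b\<rangle>" using equiv_swap_right[OF equiv_neg[OF ab]] .
  then show "a \<in> sg_D G c (sg_neg G b)" using equiv_closed unfolding sg_D_def by blast
  have "\<langle>b, sg_neg G d\<rangle> \<approx> \<langle>sg_neg G a, c\<rangle>" using equiv_neg[OF equiv_swap_left[OF ab]] .
  then show "b \<in> sg_D G (sg_neg G a) c" using equiv_closed unfolding sg_D_def by blast
qed

lemma neg_in_sg_D_iff:
  assumes "a \<in> S" "b \<in> S" "c \<in> S"
  shows "sg_neg G a \<in> sg_D G b c \<longleftrightarrow> sg_neg G c \<in> sg_D G b a"
proof -
  have "sg_neg G c \<in> sg_D G b a" if "sg_neg G a \<in> sg_D G b c" "a \<in> S" "c \<in> S" for a c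
  proof -
    have "b \<in> sg_D G (sg_neg G a) (sg_neg G c)"
      using sg_D_reverse(1)[OF that(1)] that assms(2) by simp
    then have "sg_neg G c \<in> sg_D G a b"
      using sg_D_reverse(2) that assms(2) by fastforce
    then show ?thesis using sg_D_commute by blast
  qed
  then show ?thesis using assms by blast
qed

text \<open>The sums \<open>x + (y + w)\<close> in \<open>M(G)\<close> are described by the ternary relation.\<close>
lemma sg_D_iterated_iff:
  assumes "x \<in> S" "c \<in> S"
  shows "(\<exists>t\<in>sg_D G y w. c \<in> sg_D G x t) \<longleftrightarrow> (\<exists>u\<in>S. \<exists>v\<in>S. \<langle>x, y, w\<rangle> \<approx> \<langle>c, u, v\<rangle>)"
proof
  assume "\<exists>t\<in>sg_D G y w. c \<in> sg_D G x t"
  then obtain t u v where "t \<in> S" "u \<in> S" "v \<in> S" "\<langle>t, v\<rangle> \<approx> \<langle>y, w\<rangle>" "\<langle>c, u\<rangle> \<approx> \<langle>x, t\<rangle>"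
    unfolding sg_D_def by auto
  then have "\<langle>x, y, w\<rangle> \<approx> \<langle>c, u, v\<rangle>"
    unfolding sg_equiv3_def using equiv_sym equiv_refl by blast
  then show "\<exists>u\<in>S. \<exists>v\<in>S. \<langle>x, y, w\<rangle> \<approx> \<langle>c, u, v\<rangle>" using \<open>u \<in> S\<close> \<open>v \<in> S\<close> by blast
next
  assume "\<exists>u\<in>S. \<exists>v\<in>S. \<langle>x, y, w\<rangle> \<approx> \<langle>c, u, v\<rangle>"
  then obtain t u z where "t \<in> S" "u \<in> S" "z \<in> S" "\<langle>x, t\<rangle> \<approx> \<langle>c, u\<rangle>" "\<langle>y, w\<rangle> \<approx> \<langle>t, z\<rangle>"
    unfolding sg_equiv3_def by blast
  then show "\<exists>t\<in>sg_D G y w. c \<in> sg_D G x t"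
    unfolding sg_D_def using equiv_sym assms by blast
qed

lemma sg_D_iterated_commute:
  assumes "x \<in> S" "y \<in> S" "w \<in> S"
  shows "(\<exists>t\<in>sg_D G y w. c \<in> sg_D G x t) \<longleftrightarrow> (\<exists>t\<in>sg_D G y x. c \<in> sg_D G w t)"
proof (cases "c \<in> S")
  case True
  then show ?thesis
    unfolding sg_D_iterated_iff[OF assms(1) True] sg_D_iterated_iff[OF assms(3) True]
    using equiv3_trans equiv3_swap13 assms by meson
qed (use sg_D_closed in blast)

lemma equiv3_swap:
  "a \<in> S \<Longrightarrow> b \<in> S \<Longrightarrow> \<langle>a, b, b \<cdot> a\<rangle> \<approx> \<langle>c, d, d \<cdot> c\<rangle> \<Longrightarrow> \<langle>b, a, a \<cdot> b\<rangle> \<approx> \<langle>c, d, d \<cdot> c\<rangle>"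
  using equiv3_swap_if_trans equiv3_trans by blast

end

lemma is_special_group_iff: "is_special_group G \<longleftrightarrow> special_group G"
proof
  assume "is_special_group G"
  note ax = this[unfolded is_special_group_def Let_def]
  interpret pre_special_group G
    by (insert ax, elim conjE, unfold_locales) metis+
  show "special_group G"
    by (insert ax, elim conjE, unfold_locales) (metis equiv3_closed)+
next
  assume "special_group G"
  then interpret special_group G .
  show "is_special_group G"
    unfolding is_special_group_def Let_def
    by (intro conjI ballI allI impI; (simp; fail)?)
      (metis equiv_closed equiv_refl equiv_sym equiv_trans equiv_swap equiv_neg_self equiv_mult_eq
        equiv_neg equiv_scale equiv3_trans)+
qed

section \<open>Special multifields\<close>

locale special_multifield =
  fixes F :: "'a mring"
  assumes zero_closed [simp]: "mr_zero F \<in> mr_carrier F"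
    and one_closed [simp]: "mr_one F \<in> mr_carrier F"
    and neg_closed [simp]: "x \<in> mr_carrier F \<Longrightarrow> mr_neg F x \<in> mr_carrier F"
    and mult_closed [simp]: "x \<in> mr_carrier F \<Longrightarrow> y \<in> mr_carrier F \<Longrightarrow> mr_mult F x y \<in> mr_carrier F"
    and add_closed: "x \<in> mr_carrier F \<Longrightarrow> y \<in> mr_carrier F \<Longrightarrow> mr_add F x y \<subseteq> mr_carrier F"
    and add_nonempty: "x \<in> mr_carrier F \<Longrightarrow> y \<in> mr_carrier F \<Longrightarrow> mr_add F x y \<noteq> {}"
    and add_reverse: "x \<in> mr_carrier F \<Longrightarrow> y \<in> mr_carrier F \<Longrightarrow> w \<in> mr_carrier F \<Longrightarrow>
      w \<in> mr_add F x y \<Longrightarrow> x \<in> mr_add F w (mr_neg F y) \<and> y \<in> mr_add F (mr_neg F x) w"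
    and in_zero_add_iff: "x \<in> mr_carrier F \<Longrightarrow> y \<in> mr_carrier F \<Longrightarrow> y \<in> mr_add F (mr_zero F) x \<longleftrightarrow> y = x"
    and add_assoc: "x \<in> mr_carrier F \<Longrightarrow> y \<in> mr_carrier F \<Longrightarrow> w \<in> mr_carrier F \<Longrightarrow>
      (\<Union>t\<in>mr_add F y w. mr_add F x t) = (\<Union>t\<in>mr_add F x y. mr_add F t w)"
    and add_commute: "x \<in> mr_carrier F \<Longrightarrow> y \<in> mr_carrier F \<Longrightarrow> mr_add F x y = mr_add F y x"
    and mult_assoc [simp]: "x \<in> mr_carrier F \<Longrightarrow> y \<in> mr_carrier F \<Longrightarrow> w \<in> mr_carrier F \<Longrightarrow>
      mr_mult F (mr_mult F x y) w = mr_mult F x (mr_mult F y w)"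
    and mult_commute: "x \<in> mr_carrier F \<Longrightarrow> y \<in> mr_carrier F \<Longrightarrow> mr_mult F x y = mr_mult F y x"
    and one_mult [simp]: "x \<in> mr_carrier F \<Longrightarrow> mr_mult F (mr_one F) x = x"
    and mult_zero [simp]: "x \<in> mr_carrier F \<Longrightarrow> mr_mult F x (mr_zero F) = mr_zero F"
    and mult_distrib: "a \<in> mr_carrier F \<Longrightarrow> b \<in> mr_carrier F \<Longrightarrow> c \<in> mr_carrier F \<Longrightarrow>
      d \<in> mr_carrier F \<Longrightarrow> c \<in> mr_add F a b \<Longrightarrow>
      mr_mult F c d \<in> mr_add F (mr_mult F a d) (mr_mult F b d)"
    and one_neq_zero [simp]: "mr_one F \<noteq> mr_zero F"
    and mult_inverse: "a \<in> mr_carrier F - {mr_zero F} \<Longrightarrow> \<exists>b\<in>mr_carrier F. mr_mult F a b = mr_one F"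
    and mult_self [simp]: "a \<in> mr_carrier F - {mr_zero F} \<Longrightarrow> mr_mult F a a = mr_one F"
    and add_neg_self: "a \<in> mr_carrier F - {mr_zero F} \<Longrightarrow> mr_add F a (mr_neg F a) = mr_carrier F"
    and special_sym: "a \<in> mr_carrier F - {mr_zero F} \<Longrightarrow> b \<in> mr_carrier F - {mr_zero F} \<Longrightarrow>
      c \<in> mr_carrier F - {mr_zero F} \<Longrightarrow> d \<in> mr_carrier F - {mr_zero F} \<Longrightarrow>
      mr_mult F a b = mr_mult F c d \<Longrightarrow> a \<in> mr_add F c d \<Longrightarrow> c \<in> mr_add F a b"
    and special_trans: "a \<in> mr_carrier F - {mr_zero F} \<Longrightarrow> b \<in> mr_carrier F - {mr_zero F} \<Longrightarrow>
      c \<in> mr_carrier F - {mr_zero F} \<Longrightarrow> d \<in> mr_carrier F - {mr_zero F} \<Longrightarrow>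
      e \<in> mr_carrier F - {mr_zero F} \<Longrightarrow> f \<in> mr_carrier F - {mr_zero F} \<Longrightarrow>
      mr_mult F a b = mr_mult F c d \<Longrightarrow> mr_mult F c d = mr_mult F e f \<Longrightarrow>
      a \<in> mr_add F c d \<Longrightarrow> c \<in> mr_add F e f \<Longrightarrow> a \<in> mr_add F e f"
    and special_swap: "a \<in> mr_carrier F - {mr_zero F} \<Longrightarrow> b \<in> mr_carrier F - {mr_zero F} \<Longrightarrow>
      c \<in> mr_carrier F - {mr_zero F} \<Longrightarrow> d \<in> mr_carrier F - {mr_zero F} \<Longrightarrow>
      (\<exists>x\<in>mr_carrier F - {mr_zero F}. \<exists>y\<in>mr_carrier F - {mr_zero F}. \<exists>z\<in>mr_carrier F - {mr_zero F}.
         mr_mult F a x = mr_mult F c y \<and> a = mr_mult F x z \<and> c = mr_mult F y z \<and>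
         a \<in> mr_add F c y \<and> b \<in> mr_add F x z \<and> d \<in> mr_add F y z) \<Longrightarrow>
      (\<exists>t\<in>mr_carrier F - {mr_zero F}. \<exists>v\<in>mr_carrier F - {mr_zero F}. \<exists>w\<in>mr_carrier F - {mr_zero F}.
         mr_mult F b t = mr_mult F c v \<and> b = mr_mult F t w \<and> c = mr_mult F v w \<and>
         b \<in> mr_add F c v \<and> a \<in> mr_add F t w \<and> d \<in> mr_add F v w)"

lemma is_special_multifield_iff: "is_special_multifield F \<longleftrightarrow> special_multifield F"
  unfolding is_special_multifield_def is_multifield_def is_multiring_def Let_def special_multifield_def
    Ball_def
  by (simp only: all_simps imp_conjR all_conj_distrib conj_imp_eq_imp_imp)
    (intro iffI; elim conjE; intro conjI; assumption)

section \<open>The special multifield \<open>M(G)\<close> and the unit\<close>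

lemma M_simps [simp]:
  "mr_carrier (M G) = Mcarrier G" "mr_add (M G) = Madd G" "mr_mult (M G) = Mmult G"
  "mr_neg (M G) = map_option (sg_neg G)" "mr_zero (M G) = None" "mr_one (M G) = Some (sg_one G)"
  by (simp_all add: M_def)

lemma Madd_None_right [simp]: "Madd G x None = {x}"
  by (cases x) auto

declare Madd.simps(3) [simp del]

context special_group
begin

lemma in_Mcarrier_iff: "x \<in> Mcarrier G \<longleftrightarrow> x = None \<or> (\<exists>a\<in>S. x = Some a)"
  unfolding Mcarrier_def by auto

lemma Some_in_Mcarrier [simp]: "Some a \<in> Mcarrier G \<longleftrightarrow> a \<in> S"
  unfolding Mcarrier_def by auto

lemma None_in_Mcarrier [simp]: "None \<in> Mcarrier G"
  unfolding Mcarrier_def by auto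

lemma in_Madd_Some_iff:
  assumes "a \<in> S" "b \<in> S"
  shows "z \<in> Madd G (Some a) (Some b) \<longleftrightarrow>
    (z = None \<and> a = sg_neg G b) \<or> (\<exists>c\<in>sg_D G a b. z = Some c)"
  using assms sg_D_closed sg_D_neg[of b] sg_D_commute[of "sg_neg G b" b]
  by (cases z) (auto simp: Madd.simps(3) Mcarrier_def)

lemma Some_in_Madd_iff:
  "a \<in> S \<Longrightarrow> b \<in> S \<Longrightarrow> Some c \<in> Madd G (Some a) (Some b) \<longleftrightarrow> c \<in> sg_D G a b"
  by (simp add: in_Madd_Some_iff)

lemma Madd_closed: "x \<in> Mcarrier G \<Longrightarrow> y \<in> Mcarrier G \<Longrightarrow> Madd G x y \<subseteq> Mcarrier G"
  unfolding in_Mcarrier_iff using sg_D_closed by (auto simp: in_Madd_Some_iff)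

lemma Madd_nonempty: "x \<in> Mcarrier G \<Longrightarrow> y \<in> Mcarrier G \<Longrightarrow> Madd G x y \<noteq> {}"
  unfolding in_Mcarrier_iff
  by (elim disjE bexE; simp) (metis Some_in_Madd_iff empty_iff sg_D_self)

lemma Madd_commute: "x \<in> Mcarrier G \<Longrightarrow> y \<in> Mcarrier G \<Longrightarrow> Madd G x y = Madd G y x"
  unfolding in_Mcarrier_iff using sg_D_commute eq_neg_iff by (auto simp: in_Madd_Some_iff)

lemma Madd_reverse:
  assumes "x \<in> Mcarrier G" "y \<in> Mcarrier G" "w \<in> Mcarrier G" "w \<in> Madd G x y"
  shows "x \<in> Madd G w (map_option (sg_neg G) y) \<and> y \<in> Madd G (map_option (sg_neg G) x) w"
  using assms unfolding in_Mcarrier_iff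
  by (elim disjE bexE) (auto simp: in_Madd_Some_iff sg_D_reverse)

text \<open>The None-summand of \<open>b + c\<close> (present iff \<open>b = -c\<close>) contributes only \<open>a\<close>, which
  is already obtained through any \<open>t \<in> D(b, c) = G\<close>.\<close>
lemma in_Madd_Madd_iff:
  assumes "a \<in> S" "b \<in> S" "c \<in> S"
  shows "z \<in> (\<Union>t\<in>Madd G (Some b) (Some c). Madd G (Some a) t) \<longleftrightarrow>
    (z = None \<and> sg_neg G a \<in> sg_D G b c) \<or> (\<exists>d. z = Some d \<and> (\<exists>t\<in>sg_D G b c. d \<in> sg_D G a t))"
proof
  assume "z \<in> (\<Union>t\<in>Madd G (Some b) (Some c). Madd G (Some a) t)"
  moreover have "a \<in> sg_D G a t" if "t \<in> S" for t using sg_D_self assms that by blast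
  moreover have "sg_D G (sg_neg G c) c = S" using sg_D_neg[of c] sg_D_commute assms by simp
  ultimately show "(z = None \<and> sg_neg G a \<in> sg_D G b c) \<or>
      (\<exists>d. z = Some d \<and> (\<exists>t\<in>sg_D G b c. d \<in> sg_D G a t))"
    using assms sg_D_closed by (auto simp: in_Madd_Some_iff)
next
  assume "(z = None \<and> sg_neg G a \<in> sg_D G b c) \<or>
      (\<exists>d. z = Some d \<and> (\<exists>t\<in>sg_D G b c. d \<in> sg_D G a t))"
  then obtain t where "Some t \<in> Madd G (Some b) (Some c)" "z \<in> Madd G (Some a) (Some t)"
    using assms sg_D_closed by (auto simp: in_Madd_Some_iff)
  then show "z \<in> (\<Union>t\<in>Madd G (Some b) (Some c). Madd G (Some a) t)" by blast
qed

lemma Madd_assoc: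
  assumes "x \<in> Mcarrier G" "y \<in> Mcarrier G" "w \<in> Mcarrier G"
  shows "(\<Union>t\<in>Madd G y w. Madd G x t) = (\<Union>t\<in>Madd G x y. Madd G t w)"
proof -
  consider "x = None" | "y = None" | "w = None" | a b c where
    "x = Some a" "y = Some b" "w = Some c" "a \<in> S" "b \<in> S" "c \<in> S"
    using assms unfolding in_Mcarrier_iff by blast
  then show ?thesis
  proof cases
    case 4
    have "(\<Union>t\<in>Madd G x y. Madd G t w) = (\<Union>t\<in>Madd G y x. Madd G w t)"
      using Madd_commute Madd_closed assms by (intro SUP_cong) blast+
    then show ?thesis
      unfolding set_eq_iff 4 in_Madd_Madd_iff[OF 4(4-6)] in_Madd_Madd_iff[OF 4(6,5,4)]
        neg_in_sg_D_iff[OF 4(4-6)] sg_D_iterated_commute[OF 4(4-6)] by simp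
  qed simp_all
qed

lemma Madd_distrib:
  assumes "a \<in> Mcarrier G" "b \<in> Mcarrier G" "c \<in> Mcarrier G" "d \<in> Mcarrier G"
    and "c \<in> Madd G a b"
  shows "Mmult G c d \<in> Madd G (Mmult G a d) (Mmult G b d)"
proof -
  have "r \<cdot> g \<in> sg_D G (p \<cdot> g) (q \<cdot> g)" if "r \<in> sg_D G p q" "g \<in> S" "p \<in> S" "q \<in> S" for p q r g
    using sg_D_scale[OF that(2,1)] that sg_D_closed by (simp add: mult_commute[of g])
  moreover have "p \<cdot> g = sg_neg G (q \<cdot> g)" if "p = sg_neg G q" "g \<in> S" "q \<in> S" for p q g
    using that by (simp add: mult_commute[of _ g] mult_neg)
  ultimately show ?thesis
    using assms unfolding in_Mcarrier_iff by (elim disjE bexE) (auto simp: in_Madd_Some_iff)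
qed

lemma M_equiv_iff:
  assumes "a \<in> S" "b \<in> S" "c \<in> S" "d \<in> S"
  shows "a \<cdot> b = c \<cdot> d \<and> Some a \<in> Madd G (Some c) (Some d) \<longleftrightarrow> \<langle>a, b\<rangle> \<approx> \<langle>c, d\<rangle>"
  using equiv_iff[OF assms] Some_in_Madd_iff assms by simp

lemma Mcarrier_nonzero_iff: "x \<in> Mcarrier G - {None} \<longleftrightarrow> (\<exists>a\<in>S. x = Some a)"
  unfolding Mcarrier_def by auto

lemma Bex_Mcarrier_nonzero: "(\<exists>x\<in>Mcarrier G - {None}. P x) \<longleftrightarrow> (\<exists>a\<in>S. P (Some a))"
  unfolding Mcarrier_def by auto

lemma M_mult_self: "x \<in> Mcarrier G - {None} \<Longrightarrow> Mmult G x x = Some (sg_one G)"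
  unfolding Mcarrier_nonzero_iff by auto

lemma M_mult_inverse: "x \<in> Mcarrier G - {None} \<Longrightarrow> \<exists>y\<in>Mcarrier G. Mmult G x y = Some (sg_one G)"
  using M_mult_self by blast

lemma Madd_neg_self: "x \<in> Mcarrier G - {None} \<Longrightarrow> Madd G x (map_option (sg_neg G) x) = Mcarrier G"
  unfolding Mcarrier_nonzero_iff by (auto simp: Madd.simps(3))

lemma M_special_sym:
  assumes "a \<in> Mcarrier G - {None}" "b \<in> Mcarrier G - {None}" "c \<in> Mcarrier G - {None}"
    "d \<in> Mcarrier G - {None}" "Mmult G a b = Mmult G c d" "a \<in> Madd G c d"
  shows "c \<in> Madd G a b"
proof -
  obtain a' b' c' d' where Some: "a = Some a'" "b = Some b'" "c = Some c'" "d = Some d'"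
    and S: "a' \<in> S" "b' \<in> S" "c' \<in> S" "d' \<in> S"
    using assms(1-4) unfolding Mcarrier_nonzero_iff by blast
  have "\<langle>a', b'\<rangle> \<approx> \<langle>c', d'\<rangle>" using assms(5,6) M_equiv_iff[OF S] unfolding Some by simp
  then show ?thesis using M_equiv_iff[OF S(3,4,1,2)] equiv_sym unfolding Some by blast
qed

lemma M_special_trans:
  assumes "a \<in> Mcarrier G - {None}" "b \<in> Mcarrier G - {None}" "c \<in> Mcarrier G - {None}"
    "d \<in> Mcarrier G - {None}" "e \<in> Mcarrier G - {None}" "f \<in> Mcarrier G - {None}"
    "Mmult G a b = Mmult G c d" "Mmult G c d = Mmult G e f" "a \<in> Madd G c d" "c \<in> Madd G e f"
  shows "a \<in> Madd G e f"
proof -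
  obtain a' b' c' d' e' f' where
    Some: "a = Some a'" "b = Some b'" "c = Some c'" "d = Some d'" "e = Some e'" "f = Some f'"
    and S: "a' \<in> S" "b' \<in> S" "c' \<in> S" "d' \<in> S" "e' \<in> S" "f' \<in> S"
    using assms(1-6) unfolding Mcarrier_nonzero_iff by blast
  have "\<langle>a', b'\<rangle> \<approx> \<langle>c', d'\<rangle>" using assms(7,9) M_equiv_iff[OF S(1-4)] unfolding Some by simp
  moreover have "\<langle>c', d'\<rangle> \<approx> \<langle>e', f'\<rangle>" using assms(8,10) M_equiv_iff[OF S(3-6)] unfolding Some by simp
  ultimately show ?thesis
    using M_equiv_iff[OF S(1,2,5,6)] equiv_trans assms(7,8) unfolding Some by auto
qed

text \<open>Axiom (v) for \<open>M(G)\<close> states literally that \<open>\<langle>a, b, b \<cdot> a\<rangle> \<approx> \<langle>c, d, d \<cdot> c\<rangle>\<close>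
  implies \<open>\<langle>b, a, a \<cdot> b\<rangle> \<approx> \<langle>c, d, d \<cdot> c\<rangle>\<close>.\<close>
lemma equiv3_swap_form_iff:
  assumes "p \<in> S" "q \<in> S" "r \<in> S" "s \<in> S"
  shows "\<langle>p, q, q \<cdot> p\<rangle> \<approx> \<langle>r, s, s \<cdot> r\<rangle> \<longleftrightarrow>
    (\<exists>x\<in>Mcarrier G - {None}. \<exists>y\<in>Mcarrier G - {None}. \<exists>z\<in>Mcarrier G - {None}.
      Mmult G (Some p) x = Mmult G (Some r) y \<and> Some p = Mmult G x z \<and> Some r = Mmult G y z \<and>
      Some p \<in> Madd G (Some r) y \<and> Some q \<in> Madd G x z \<and> Some s \<in> Madd G y z)"
proof -
  have "\<langle>q, q \<cdot> p\<rangle> \<approx> \<langle>x, z\<rangle> \<longleftrightarrow> p = x \<cdot> z \<and> Some q \<in> Madd G (Some x) (Some z)"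
    if "x \<in> S" "z \<in> S" for x z
    using M_equiv_iff[of q "q \<cdot> p" x z] that assms by auto
  moreover have "\<langle>s, s \<cdot> r\<rangle> \<approx> \<langle>y, z\<rangle> \<longleftrightarrow> r = y \<cdot> z \<and> Some s \<in> Madd G (Some y) (Some z)"
    if "y \<in> S" "z \<in> S" for y z
    using M_equiv_iff[of s "s \<cdot> r" y z] that assms by auto
  ultimately show ?thesis
    unfolding sg_equiv3_def Bex_Mcarrier_nonzero Mmult.simps option.inject
    using M_equiv_iff[of p _ r] assms by (intro bex_cong refl) blast
qed

lemma M_special_swap:
  assumes "a \<in> Mcarrier G - {None}" "b \<in> Mcarrier G - {None}" "c \<in> Mcarrier G - {None}"
    "d \<in> Mcarrier G - {None}"
    "\<exists>x\<in>Mcarrier G - {None}. \<exists>y\<in>Mcarrier G - {None}. \<exists>z\<in>Mcarrier G - {None}.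
      Mmult G a x = Mmult G c y \<and> a = Mmult G x z \<and> c = Mmult G y z \<and>
      a \<in> Madd G c y \<and> b \<in> Madd G x z \<and> d \<in> Madd G y z"
  shows "\<exists>t\<in>Mcarrier G - {None}. \<exists>v\<in>Mcarrier G - {None}. \<exists>w\<in>Mcarrier G - {None}.
      Mmult G b t = Mmult G c v \<and> b = Mmult G t w \<and> c = Mmult G v w \<and>
      b \<in> Madd G c v \<and> a \<in> Madd G t w \<and> d \<in> Madd G v w"
proof -
  obtain a' b' c' d' where Some: "a = Some a'" "b = Some b'" "c = Some c'" "d = Some d'"
    and S: "a' \<in> S" "b' \<in> S" "c' \<in> S" "d' \<in> S"
    using assms(1-4) unfolding Mcarrier_nonzero_iff by blast
  have "\<langle>a', b', b' \<cdot> a'\<rangle> \<approx> \<langle>c', d', d' \<cdot> c'\<rangle>"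
    using assms(5) unfolding equiv3_swap_form_iff[OF S] Some .
  then have "\<langle>b', a', a' \<cdot> b'\<rangle> \<approx> \<langle>c', d', d' \<cdot> c'\<rangle>"
    using equiv3_swap S by blast
  then show ?thesis
    unfolding equiv3_swap_form_iff[OF S(2,1,3,4)] Some .
qed

lemma special_multifield_M: "special_multifield (M G)"
  by (unfold_locales; unfold M_simps)
    ((rule Madd_closed Madd_nonempty Madd_reverse Madd_assoc Madd_commute Madd_distrib
      M_mult_inverse M_mult_self Madd_neg_self M_special_sym M_special_trans M_special_swap; assumption)
    | fastforce simp: in_Mcarrier_iff intro: mult_commute)+

end

lemma sg_morphism_one:
  assumes "exp2_group G" "exp2_group H" "sg_morphism G H f"
  shows "f (sg_one G) = sg_one H"
proof -
  have "f (sg_one G) = sg_mult H (f (sg_one G)) (f (sg_one G))"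
    using assms exp2_group.one_closed exp2_group.one_mult unfolding sg_morphism_def by metis
  then show ?thesis
    using assms exp2_group.one_closed exp2_group.mult_self unfolding sg_morphism_def by metis
qed

lemma sg_morphism_neg:
  "sg_morphism G H f \<Longrightarrow> a \<in> sg_carrier G \<Longrightarrow> sg_mone G \<in> sg_carrier G \<Longrightarrow>
    f (sg_neg G a) = sg_neg H (f a)"
  unfolding sg_morphism_def sg_neg_def by simp

lemma sg_morphism_sg_D:
  "sg_morphism G H f \<Longrightarrow> c \<in> sg_D G a b \<Longrightarrow> f c \<in> sg_D H (f a) (f b)"
  unfolding sg_morphism_def sg_D_def by blast

lemma mr_morphism_M:
  assumes "special_group G" "special_group H" and f: "sg_morphism G H f"
  shows "mr_morphism (M G) (M H) (map_option f)"
proof -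
  interpret G: special_group G by fact
  interpret H: special_group H by fact
  have closed: "f a \<in> sg_carrier H" if "a \<in> sg_carrier G" for a
    using f that unfolding sg_morphism_def by blast
  have mult: "f (sg_mult G a b) = sg_mult H (f a) (f b)" if "a \<in> sg_carrier G" "b \<in> sg_carrier G" for a b
    using f that unfolding sg_morphism_def by blast
  have neg: "f (sg_neg G a) = sg_neg H (f a)" if "a \<in> sg_carrier G" for a
    using sg_morphism_neg[OF f that] by simp
  have add: "map_option f z \<in> Madd H (map_option f x) (map_option f y)"
    if "x \<in> Mcarrier G" "y \<in> Mcarrier G" "z \<in> Madd G x y" for x y z
    using that closed neg sg_morphism_sg_D[OF f] unfolding G.in_Mcarrier_iff
    by (auto simp: G.in_Madd_Some_iff H.in_Madd_Some_iff)
  have one: "f (sg_one G) = sg_one H"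
    using sg_morphism_one[OF G.exp2_group_axioms H.exp2_group_axioms f] .
  show ?thesis
    unfolding mr_morphism_def M_simps
    by (intro conjI ballI impI add) (auto simp: G.in_Mcarrier_iff closed mult neg one)
qed

lemma bullet_simps [simp]:
  "sg_carrier (bullet F) = mr_carrier F - {mr_zero F}" "sg_mult (bullet F) = mr_mult F"
  "sg_one (bullet F) = mr_one F" "sg_mone (bullet F) = mr_neg F (mr_one F)"
  by (simp_all add: bullet_def)

lemma sg_equiv_bullet_iff:
  "sg_equiv (bullet F) a b c d \<longleftrightarrow>
    a \<in> mr_carrier F - {mr_zero F} \<and> b \<in> mr_carrier F - {mr_zero F} \<and>
    c \<in> mr_carrier F - {mr_zero F} \<and> d \<in> mr_carrier F - {mr_zero F} \<and>
    mr_mult F a b = mr_mult F c d \<and> a \<in> mr_add F c d"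
  by (simp add: bullet_def)

context special_group
begin

lemma carrier_bullet_M: "sg_carrier (bullet (M G)) = Some ` S"
  by (auto simp: Mcarrier_def)

lemma sg_equiv_bullet_M_Some_iff:
  "sg_equiv (bullet (M G)) (Some a) (Some b) (Some c) (Some d) \<longleftrightarrow> \<langle>a, b\<rangle> \<approx> \<langle>c, d\<rangle>"
proof
  assume "sg_equiv (bullet (M G)) (Some a) (Some b) (Some c) (Some d)"
  then show "\<langle>a, b\<rangle> \<approx> \<langle>c, d\<rangle>"
    using M_equiv_iff[of a b c d] by (auto simp: sg_equiv_bullet_iff)
next
  assume e: "\<langle>a, b\<rangle> \<approx> \<langle>c, d\<rangle>"
  then show "sg_equiv (bullet (M G)) (Some a) (Some b) (Some c) (Some d)"
    using M_equiv_iff[of a b c d] equiv_closed[OF e] by (auto simp: sg_equiv_bullet_iff)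
qed

lemma sg_iso_Some: "sg_iso G (bullet (M G)) Some"
proof -
  have "sg_morphism G (bullet (M G)) Some"
    unfolding sg_morphism_def by (simp add: sg_equiv_bullet_M_Some_iff sg_neg_def)
  moreover have "sg_equiv G (the x) (the y) (the u) (the v)"
    if e: "sg_equiv (bullet (M G)) x y u v" for x y u v
  proof -
    obtain a b c d where "x = Some a" "y = Some b" "u = Some c" "v = Some d"
      using e by (auto simp: sg_equiv_bullet_iff Mcarrier_nonzero_iff)
    then show ?thesis using e sg_equiv_bullet_M_Some_iff by simp
  qed
  then have "sg_morphism (bullet (M G)) G the"
    unfolding sg_morphism_def carrier_bullet_M by (auto simp: sg_neg_def)
  ultimately show ?thesis
    unfolding sg_iso_def carrier_bullet_M by auto
qed

end

section \<open>The special group \<open>F\<^sup>\<bullet>\<close> and the counit\<close>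

lemma counit_None [simp]: "counit F None = mr_zero F"
  and counit_Some [simp]: "counit F (Some a) = a"
  by (simp_all add: counit_def)

context special_multifield
begin

abbreviation R :: "'a set" where "R \<equiv> mr_carrier F"
abbreviation U :: "'a set" where "U \<equiv> mr_carrier F - {mr_zero F}"
abbreviation mmult :: "'a \<Rightarrow> 'a \<Rightarrow> 'a" (infixl "\<otimes>" 70) where "x \<otimes> y \<equiv> mr_mult F x y"
abbreviation madd :: "'a \<Rightarrow> 'a \<Rightarrow> 'a set" (infixl "\<boxplus>" 65) where "x \<boxplus> y \<equiv> mr_add F x y"

lemma zero_mult [simp]: "x \<in> R \<Longrightarrow> mr_zero F \<otimes> x = mr_zero F"
  using mult_commute by simp

lemma mult_one [simp]: "x \<in> R \<Longrightarrow> x \<otimes> mr_one F = x"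
  using mult_commute[of x "mr_one F"] by simp

lemma zero_add [simp]: "x \<in> R \<Longrightarrow> mr_zero F \<boxplus> x = {x}"
  using in_zero_add_iff add_closed[of "mr_zero F" x] by auto

lemma add_zero [simp]: "x \<in> R \<Longrightarrow> x \<boxplus> mr_zero F = {x}"
  using add_commute[of x "mr_zero F"] by simp

lemma zero_in_add_neg: "x \<in> R \<Longrightarrow> mr_zero F \<in> x \<boxplus> mr_neg F x"
  using add_reverse[of "mr_zero F" x x] by simp

lemma neg_unique:
  assumes "x \<in> R" "y \<in> R" "mr_zero F \<in> x \<boxplus> y"
  shows "y = mr_neg F x"
proof -
  have "y \<in> mr_neg F x \<boxplus> mr_zero F" using add_reverse[of x y "mr_zero F"] assms zero_closed by blast
  then show ?thesis using assms by simp
qed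

lemma neg_neg [simp]: "x \<in> R \<Longrightarrow> mr_neg F (mr_neg F x) = x"
  using neg_unique[of "mr_neg F x" x] zero_in_add_neg add_commute by simp

lemma neg_zero [simp]: "mr_neg F (mr_zero F) = mr_zero F"
  using zero_in_add_neg[of "mr_zero F"] by simp

lemma neg_one_mult: assumes "x \<in> R" shows "mr_neg F (mr_one F) \<otimes> x = mr_neg F x"
proof -
  have "mr_zero F \<otimes> x \<in> (mr_one F \<otimes> x) \<boxplus> (mr_neg F (mr_one F) \<otimes> x)"
    using mult_distrib[of "mr_one F" "mr_neg F (mr_one F)" "mr_zero F" x] zero_in_add_neg[of "mr_one F"] assms by simp
  then show ?thesis using neg_unique assms by simp
qed

lemma neg_nonzero:
  assumes "x \<in> U"
  shows "mr_neg F x \<in> U"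
proof -
  have "mr_neg F x \<noteq> mr_zero F"
  proof
    assume "mr_neg F x = mr_zero F"
    then have "x = mr_zero F" using neg_neg[of x] assms by simp
    then show False using assms by simp
  qed
  then show ?thesis using assms by simp
qed

lemma mult_nonzero:
  assumes "a \<in> U" "b \<in> U"
  shows "a \<otimes> b \<in> U"
proof -
  have "a \<otimes> b \<noteq> mr_zero F"
  proof
    assume ab: "a \<otimes> b = mr_zero F"
    have "b = a \<otimes> (a \<otimes> b)" using assms by (simp flip: mult_assoc)
    also have "\<dots> = mr_zero F" using ab assms by simp
    finally show False using assms by simp
  qed
  then show ?thesis using assms mult_closed by blast
qed

sublocale bullet: exp2_group "bullet F"
  rewrites "sg_carrier (bullet F) = U" and "sg_mult (bullet F) = mr_mult F"
    and "sg_one (bullet F) = mr_one F"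
  by (unfold_locales; unfold bullet_simps) (rule mult_nonzero; assumption | simp)+

lemma sg_neg_bullet [simp]: "a \<in> R \<Longrightarrow> sg_neg (bullet F) a = mr_neg F a"
  by (simp add: sg_neg_def neg_one_mult)

lemma mult_eq_swap:
  assumes "a \<in> U" "b \<in> U" "c \<in> U" "d \<in> U" "a \<otimes> b = c \<otimes> d"
  shows "b \<otimes> d = a \<otimes> c"
proof -
  have "b \<otimes> d = b \<otimes> (c \<otimes> (a \<otimes> b))"
    using assms bullet.mult_self_left[of c d] by simp
  also have "\<dots> = c \<otimes> (b \<otimes> (a \<otimes> b))"
    using assms mult_nonzero by (simp add: bullet.mult_left_commute)
  also have "\<dots> = c \<otimes> a"
    using assms(1,2) by simp
  finally show ?thesis using assms bullet.mult_commute by simp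
qed

text \<open>If \<open>t \<in> a + b\<close> is nonzero, then \<open>\<langle>t, t \<otimes> a \<otimes> b\<rangle> \<equiv> \<langle>a, b\<rangle>\<close>, and (iii) and (iv) lead
  back from \<open>t\<close> to \<open>a\<close>.\<close>
lemma self_in_add:
  assumes a: "a \<in> U" and b: "b \<in> U"
  shows "a \<in> a \<boxplus> b"
proof (cases "mr_zero F \<in> a \<boxplus> b")
  case True
  then have "b = mr_neg F a" using neg_unique a b by simp
  then show ?thesis using add_neg_self a by simp
next
  case False
  obtain t where t: "t \<in> a \<boxplus> b" using add_nonempty a b by blast
  have tU: "t \<in> U" using t False add_closed a b by blast
  define s where "s = t \<otimes> (a \<otimes> b)"
  have sU: "s \<in> U" unfolding s_def using mult_nonzero[OF tU mult_nonzero[OF a b]] .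
  have ts: "t \<otimes> s = a \<otimes> b" unfolding s_def using tU a b mult_nonzero by simp
  have "a \<in> t \<boxplus> s" using special_sym[OF tU sU a b ts t] .
  then show ?thesis using special_trans[OF a b tU sU a b ts[symmetric] ts _ t] by simp
qed

lemma self_in_add_right: "a \<in> U \<Longrightarrow> b \<in> U \<Longrightarrow> a \<in> b \<boxplus> a"
  using self_in_add add_commute by blast

lemma mult_add_left: "g \<in> R \<Longrightarrow> a \<in> R \<Longrightarrow> c \<in> R \<Longrightarrow> d \<in> R \<Longrightarrow> a \<in> c \<boxplus> d \<Longrightarrow>
    g \<otimes> a \<in> (g \<otimes> c) \<boxplus> (g \<otimes> d)"
  using mult_distrib[of c d a g] by (simp add: mult_commute[of _ g])

lemma bullet_equiv_refl: "a \<in> U \<Longrightarrow> b \<in> U \<Longrightarrow> sg_equiv (bullet F) a b a b"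
  using self_in_add by (simp add: sg_equiv_bullet_iff)

lemma bullet_equiv_sym: "sg_equiv (bullet F) a b c d \<Longrightarrow> sg_equiv (bullet F) c d a b"
  using special_sym by (auto simp: sg_equiv_bullet_iff)

lemma bullet_equiv_trans:
  "sg_equiv (bullet F) a b c d \<Longrightarrow> sg_equiv (bullet F) c d e f \<Longrightarrow> sg_equiv (bullet F) a b e f"
  unfolding sg_equiv_bullet_iff using special_trans[of a b c d e f] by auto

lemma bullet_equiv_swap: "a \<in> U \<Longrightarrow> b \<in> U \<Longrightarrow> sg_equiv (bullet F) a b b a"
  using self_in_add_right bullet.mult_commute by (simp add: sg_equiv_bullet_iff)

lemma bullet_equiv_scale:
  assumes g: "g \<in> U" and e: "sg_equiv (bullet F) a b c d"
  shows "sg_equiv (bullet F) (g \<otimes> a) (g \<otimes> b) (g \<otimes> c) (g \<otimes> d)"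
proof -
  have h: "a \<in> U" "b \<in> U" "c \<in> U" "d \<in> U" "a \<otimes> b = c \<otimes> d" "a \<in> c \<boxplus> d"
    using e by (simp_all add: sg_equiv_bullet_iff)
  have "(g \<otimes> a) \<otimes> (g \<otimes> b) = a \<otimes> b" using g h by (intro bullet.mult_scaled)
  also have "\<dots> = c \<otimes> d" using h by simp
  also have "\<dots> = (g \<otimes> c) \<otimes> (g \<otimes> d)" using g h by (intro bullet.mult_scaled[symmetric])
  finally show ?thesis
    using g h mult_nonzero mult_add_left by (simp add: sg_equiv_bullet_iff)
qed

sublocale bullet: pre_special_group "bullet F"
  rewrites "sg_carrier (bullet F) = U" and "sg_mult (bullet F) = mr_mult F"
    and "sg_one (bullet F) = mr_one F"
  by (unfold_locales; (unfold bullet_simps)?)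
    ((rule bullet_equiv_refl bullet_equiv_sym bullet_equiv_trans bullet_equiv_swap bullet_equiv_scale;
      assumption) | simp add: sg_equiv_bullet_iff)+

lemma neg_mult:
  assumes "x \<in> R" "y \<in> R"
  shows "mr_neg F x \<otimes> y = mr_neg F (x \<otimes> y)"
proof -
  have "mr_neg F x \<otimes> y = (mr_neg F (mr_one F) \<otimes> x) \<otimes> y" using neg_one_mult assms by simp
  also have "\<dots> = mr_neg F (mr_one F) \<otimes> (x \<otimes> y)" using assms by simp
  also have "\<dots> = mr_neg F (x \<otimes> y)" using neg_one_mult assms by simp
  finally show ?thesis .
qed

lemma mult_neg: "x \<in> R \<Longrightarrow> y \<in> R \<Longrightarrow> x \<otimes> mr_neg F y = mr_neg F (x \<otimes> y)"
  using neg_mult mult_commute by simp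

lemma bullet_equiv_neg_self:
  assumes "a \<in> U"
  shows "sg_equiv (bullet F) a (mr_neg F a) (mr_one F) (mr_neg F (mr_one F))"
  using assms neg_nonzero[of a] neg_nonzero[of "mr_one F"] add_neg_self[of "mr_one F"]
  by (simp add: sg_equiv_bullet_iff mult_neg)

lemma bullet_equiv_neg:
  assumes e: "sg_equiv (bullet F) a b c d"
  shows "sg_equiv (bullet F) a (mr_neg F c) (mr_neg F b) d"
proof -
  have h: "a \<in> U" "b \<in> U" "c \<in> U" "d \<in> U" "a \<otimes> b = c \<otimes> d" "a \<in> c \<boxplus> d"
    using e by (simp_all add: sg_equiv_bullet_iff)
  have "c \<in> a \<boxplus> b" using special_sym h by blast
  then have "b \<in> mr_neg F a \<boxplus> c" using add_reverse h by blast
  then have "mr_neg F b \<in> a \<boxplus> mr_neg F c"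
    using mult_add_left[of "mr_neg F (mr_one F)" b "mr_neg F a" c] h by (simp add: neg_one_mult)
  moreover have prod: "mr_neg F b \<otimes> d = a \<otimes> mr_neg F c"
    using mult_eq_swap[OF h(1-5)] h by (simp add: neg_mult mult_neg)
  moreover have "mr_neg F b \<in> U" "mr_neg F c \<in> U" using neg_nonzero h by blast+
  ultimately have "a \<in> mr_neg F b \<boxplus> d" using special_sym h by blast
  then show ?thesis
    using h prod neg_nonzero by (simp add: sg_equiv_bullet_iff)
qed

text \<open>As for \<open>M(G)\<close>, axiom (v) is the swap property of the ternary relation on \<open>F\<^sup>\<bullet>\<close>.\<close>
lemma sg_equiv3_bullet_swap_form_iff:
  assumes "a \<in> U" "b \<in> U" "c \<in> U" "d \<in> U"
  shows "sg_equiv3 (bullet F) a b (b \<otimes> a) c d (d \<otimes> c) \<longleftrightarrow>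
    (\<exists>x\<in>U. \<exists>y\<in>U. \<exists>z\<in>U. a \<otimes> x = c \<otimes> y \<and> a = x \<otimes> z \<and> c = y \<otimes> z \<and>
      a \<in> c \<boxplus> y \<and> b \<in> x \<boxplus> z \<and> d \<in> y \<boxplus> z)"
  unfolding sg_equiv3_def bullet_simps sg_equiv_bullet_iff
  using assms mult_nonzero by (intro bex_cong refl) auto

lemma bullet_equiv3_swap:
  assumes "a \<in> U" "b \<in> U" "sg_equiv3 (bullet F) a b (b \<otimes> a) c d (d \<otimes> c)"
  shows "sg_equiv3 (bullet F) b a (a \<otimes> b) c d (d \<otimes> c)"
proof -
  have "c \<in> U" "d \<in> U" using bullet.equiv3_closed[OF assms(3)] by auto
  then show ?thesis
    using assms special_swap[of a b c d]
    unfolding sg_equiv3_bullet_swap_form_iff[OF assms(1,2) \<open>c \<in> U\<close> \<open>d \<in> U\<close>]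
      sg_equiv3_bullet_swap_form_iff[OF assms(2,1) \<open>c \<in> U\<close> \<open>d \<in> U\<close>]
    by blast
qed

lemma special_group_bullet: "special_group (bullet F)"
proof unfold_locales
  show "sg_mone (bullet F) \<in> sg_carrier (bullet F)" using neg_nonzero[of "mr_one F"] by simp
  show "sg_equiv (bullet F) a (sg_neg (bullet F) c) (sg_neg (bullet F) b) d"
    if "sg_equiv (bullet F) a b c d" for a b c d
  proof -
    have "b \<in> R" "c \<in> R" using that by (simp_all add: sg_equiv_bullet_iff)
    then show ?thesis using bullet_equiv_neg[OF that] by simp
  qed
qed (auto simp: sg_neg_bullet intro: bullet_equiv_neg_self bullet.equiv3_trans_if_swap bullet_equiv3_swap)

sublocale bullet: special_group "bullet F"
  rewrites "sg_carrier (bullet F) = U" and "sg_mult (bullet F) = mr_mult F"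
    and "sg_one (bullet F) = mr_one F"
  by (intro conjunctionI special_group_bullet) simp_all

lemma sg_D_bullet:
  assumes a: "a \<in> U" and b: "b \<in> U"
  shows "sg_D (bullet F) a b = a \<boxplus> b - {mr_zero F}"
proof
  show "sg_D (bullet F) a b \<subseteq> a \<boxplus> b - {mr_zero F}"
    unfolding sg_D_def by (auto simp: sg_equiv_bullet_iff)
  show "a \<boxplus> b - {mr_zero F} \<subseteq> sg_D (bullet F) a b"
  proof
    fix c assume c: "c \<in> a \<boxplus> b - {mr_zero F}"
    then have cU: "c \<in> U" using add_closed a b by blast
    have ab: "a \<otimes> b \<in> U" using mult_nonzero a b by blast
    have "sg_equiv (bullet F) c (c \<otimes> (a \<otimes> b)) a b"
      using c cU a b ab mult_nonzero[OF cU ab] bullet.mult_self_left[OF cU ab]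
      by (simp add: sg_equiv_bullet_iff)
    then show "c \<in> sg_D (bullet F) a b"
      unfolding sg_D_def using cU mult_nonzero[OF cU ab] by auto
  qed
qed

lemma counit_closed: "x \<in> Mcarrier (bullet F) \<Longrightarrow> counit F x \<in> R"
  by (auto simp: bullet.in_Mcarrier_iff)

lemma counit_image_Mcarrier: "counit F ` Mcarrier (bullet F) = R"
  by (force simp: Mcarrier_def)

lemma counit_image_Madd:
  assumes "x \<in> Mcarrier (bullet F)" "y \<in> Mcarrier (bullet F)"
  shows "counit F ` Madd (bullet F) x y = counit F x \<boxplus> counit F y"
proof -
  consider "x = None" | "y = None" | a b where "x = Some a" "y = Some b" "a \<in> U" "b \<in> U"
    using assms unfolding bullet.in_Mcarrier_iff by blast
  then show ?thesis
  proof cases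
    case 3
    show ?thesis
    proof (cases "a = mr_neg F b")
      case True
      then have "a \<boxplus> b = R" using add_neg_self[of b] add_commute 3 by simp
      then show ?thesis using True 3 counit_image_Mcarrier by (simp add: Madd.simps(3))
    next
      case False
      then have "mr_zero F \<notin> a \<boxplus> b" using neg_unique 3 by force
      then show ?thesis
        using False 3 by (simp add: Madd.simps(3) sg_D_bullet image_image)
    qed
  qed (use assms counit_closed in simp_all)
qed

lemma inj_on_counit: "inj_on (counit F) (Mcarrier (bullet F))"
  by (auto simp: inj_on_def bullet.in_Mcarrier_iff)

lemma mr_morphism_counit: "mr_morphism (M (bullet F)) F (counit F)"
proof -
  have add: "counit F z \<in> counit F x \<boxplus> counit F y"
    if "x \<in> Mcarrier (bullet F)" "y \<in> Mcarrier (bullet F)" "z \<in> Madd (bullet F) x y" for x y z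
    using counit_image_Madd[OF that(1,2)] that(3) by blast
  show ?thesis
    unfolding mr_morphism_def M_simps
    by (intro conjI ballI impI add counit_closed) (auto simp: bullet.in_Mcarrier_iff)
qed

end

lemma mr_iso_if_bij_betw:
  assumes "special_multifield R" and f: "mr_morphism R T f"
    and bij: "bij_betw f (mr_carrier R) (mr_carrier T)"
    and add: "\<And>x y. x \<in> mr_carrier R \<Longrightarrow> y \<in> mr_carrier R \<Longrightarrow>
      f ` mr_add R x y = mr_add T (f x) (f y)"
  shows "mr_iso R T f"
proof -
  interpret R: special_multifield R by fact
  define g where "g = inv_into (mr_carrier R) f"
  have g_closed: "g y \<in> mr_carrier R" if "y \<in> mr_carrier T" for y
    using that bij unfolding g_def bij_betw_def by (auto intro: inv_into_into)
  have f_g: "f (g y) = y" if "y \<in> mr_carrier T" for y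
    using that bij unfolding g_def bij_betw_def by (auto intro: f_inv_into_f)
  have g_eq: "g y = x" if "x \<in> mr_carrier R" "f x = y" for x y
    using that bij unfolding g_def bij_betw_def by (auto intro: inv_into_f_f)
  have "mr_morphism T R g"
    unfolding mr_morphism_def
  proof (intro conjI ballI impI)
    fix a b c assume ab: "a \<in> mr_carrier T" "b \<in> mr_carrier T" and "c \<in> mr_add T a b"
    moreover have "f ` mr_add R (g a) (g b) = mr_add T a b"
      using add[OF g_closed[OF ab(1)] g_closed[OF ab(2)]] f_g[OF ab(1)] f_g[OF ab(2)] by simp
    ultimately have "c \<in> f ` mr_add R (g a) (g b)" by simp
    then obtain z where z: "z \<in> mr_add R (g a) (g b)" "c = f z" by blast
    then have "z \<in> mr_carrier R" using R.add_closed g_closed ab by blast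
    then show "g c \<in> mr_add R (g a) (g b)" using g_eq z by simp
  qed (use f g_closed f_g g_eq in \<open>auto simp: mr_morphism_def\<close>)
  then show ?thesis
    unfolding mr_iso_def using f g_eq f_g by blast
qed

context special_multifield
begin

lemma mr_iso_counit: "mr_iso (M (bullet F)) F (counit F)"
  using bullet.special_multifield_M mr_morphism_counit counit_image_Madd inj_on_counit counit_image_Mcarrier
  by (intro mr_iso_if_bij_betw) (auto simp: bij_betw_def)

lemma sg_morphism_bullet:
  assumes "special_multifield K" and f: "mr_morphism F K f"
  shows "sg_morphism (bullet F) (bullet K) f"
proof -
  interpret K: special_multifield K by fact
  have closed: "f x \<in> mr_carrier K" if "x \<in> R" for x
    using f that unfolding mr_morphism_def by blast
  have mult: "f (x \<otimes> y) = mr_mult K (f x) (f y)" if "x \<in> R" "y \<in> R" for x y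
    using f that unfolding mr_morphism_def by blast
  have add: "f c \<in> mr_add K (f a) (f b)" if "a \<in> R" "b \<in> R" "c \<in> R" "c \<in> a \<boxplus> b" for a b c
    using f that unfolding mr_morphism_def by blast
  have one: "f (mr_one F) = mr_one K"
    using f unfolding mr_morphism_def by blast
  have neg_one: "f (mr_neg F (mr_one F)) = mr_neg K (mr_one K)"
    using f one unfolding mr_morphism_def by simp
  have nonzero: "f x \<in> mr_carrier K - {mr_zero K}" if x: "x \<in> U" for x
  proof -
    have "mr_mult K (f x) (f x) = f (x \<otimes> x)" using x by (intro mult[symmetric]) auto
    also have "\<dots> = mr_one K" using x one by simp
    finally have "mr_mult K (f x) (f x) = mr_one K" .
    then have "f x \<noteq> mr_zero K" using K.one_neq_zero by force
    then show ?thesis using closed x by simp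
  qed
  show ?thesis
    unfolding sg_morphism_def bullet_simps sg_equiv_bullet_iff
    using nonzero add neg_one by (auto simp flip: mult)
qed

end

section \<open>The equivalence\<close>

lemma counit_natural: "mr_morphism F K f \<Longrightarrow> f (counit F x) = counit K (map_option f x)"
  by (cases x) (simp_all add: mr_morphism_def)

theorem theorem5p12:
  shows
  \<comment> \<open>M is a functor SG \<rightarrow> SMF\<close>
  "(\<forall>G :: 'a sgroup. is_special_group G \<longrightarrow> is_special_multifield (M G)) \<and>
   (\<forall>(G :: 'a sgroup) (H :: 'b sgroup) f. is_special_group G \<longrightarrow> is_special_group H \<longrightarrow>
       sg_morphism G H f \<longrightarrow> mr_morphism (M G) (M H) (map_option f)) \<and>
   \<comment> \<open>bullet is a functor SMF \<rightarrow> SG\<close>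
   (\<forall>F :: 'c mring. is_special_multifield F \<longrightarrow> is_special_group (bullet F)) \<and>
   (\<forall>(F :: 'c mring) (K :: 'd mring) f. is_special_multifield F \<longrightarrow> is_special_multifield K \<longrightarrow>
       mr_morphism F K f \<longrightarrow> sg_morphism (bullet F) (bullet K) f) \<and>
   \<comment> \<open>unit G \<cong> (M G)-bullet, natural\<close>
   (\<forall>G :: 'a sgroup. is_special_group G \<longrightarrow> sg_iso G (bullet (M G)) Some) \<and>
   (\<forall>(G :: 'a sgroup) (H :: 'b sgroup) f. sg_morphism G H f \<longrightarrow>
       (\<forall>x\<in>sg_carrier G. map_option f (Some x) = Some (f x))) \<and>
   \<comment> \<open>counit M(F-bullet) \<cong> F, natural\<close>
   (\<forall>F :: 'c mring. is_special_multifield F \<longrightarrow> mr_iso (M (bullet F)) F (counit F)) \<and>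
   (\<forall>(F :: 'c mring) (K :: 'd mring) f. is_special_multifield F \<longrightarrow> is_special_multifield K \<longrightarrow>
       mr_morphism F K f \<longrightarrow>
       (\<forall>x\<in>mr_carrier (M (bullet F)). f (counit F x) = counit K (map_option f x)))"
  unfolding is_special_group_iff is_special_multifield_iff
  using special_group.special_multifield_M mr_morphism_M special_multifield.special_group_bullet
    special_multifield.sg_morphism_bullet special_group.sg_iso_Some special_multifield.mr_iso_counit
    counit_natural
  by blast

end
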